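(* Let $u_t=F$ be an autonomous evolution PDE for a scalar $u(x,t)$, with $F=c_1 u + c_2 u^2 + c_3 u^3 + c_4 u_x + c_5 u_{xx} + c_6 u_{xxx} + c_7 u_{xxxx} + c_8\, u u_x + c_9\, u u_{xx} + c_{10}\, u^2 u_x$ for real constants $c_j$, where $1,u,u^2,u_x,u_{xx},u\cdot u_x$ are linearly independent on the jet space $J^{(2)}$. If the PDE is Galilean-invariant, i.e. admits the Lie point symmetry generator $t\partial_x+\partial_u$, then its true support $S^*=\{\text{terms with } c_j\neq 0\}$ is contained in the implementation-reduced library $\mathcal{L}_G=\{u_x,u_{xx},u_{xxx},u_{xxxx},u\cdot u_x,u\cdot u_{xx},u^2\cdot u_x\}$ (the ten-term library with $u,u^2,u^3$ removed).
   Context: A PDE $u_t=F$ admits the generator $\mathbf v=t\partial_x+\partial_u$ if the prolonged vector field $\mathrm{pr}\,\mathbf v$ annihilates $u_t-F$ whenever $u_t=F$; equivalently the Galilean boost $(x,t,u)\mapsto(x+ct,t,u+c)$ maps solutions to solutions for every $c\in\mathbb R$. Subscripts denote partial derivatives. *)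

theory Defs
  imports Complex_Main
begin

record jet4 =
  jx :: real
  jt :: real
  ju :: real
  jut :: real
  jux :: real
  juxx :: real
  juxxx :: real
  juxxxx :: real

definition rhsF :: "(nat \<Rightarrow> real) \<Rightarrow> jet4 \<Rightarrow> real" where
  "rhsF c J =
     c 1 * ju J + c 2 * (ju J)^2 + c 3 * (ju J)^3 + c 4 * jux J + c 5 * juxx J
   + c 6 * juxxx J + c 7 * juxxxx J + c 8 * (ju J * jux J) + c 9 * (ju J * juxx J)
   + c 10 * ((ju J)^2 * jux J)"

definition on_pde :: "(nat \<Rightarrow> real) \<Rightarrow> jet4 \<Rightarrow> bool" where
  "on_pde c J \<longleftrightarrow> jut J = rhsF c J"

text \<open>Prolongation to J^(4) of the Galilean boost (x,t,u) \<mapsto> (x+\<epsilon>t, t, u+\<epsilon>):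
  the transformed function is U(X,t) = u(X-\<epsilon>t,t)+\<epsilon>, so U_t = u_t - \<epsilon> u_x and
  all pure x-derivatives are unchanged.\<close>
definition galilean_boost :: "real \<Rightarrow> jet4 \<Rightarrow> jet4" where
  "galilean_boost \<epsilon> J =
     J\<lparr>jx := jx J + \<epsilon> * jt J, ju := ju J + \<epsilon>, jut := jut J - \<epsilon> * jux J\<rparr>"

definition galilean_invariant :: "(nat \<Rightarrow> real) \<Rightarrow> bool" where
  "galilean_invariant c \<longleftrightarrow>
     (\<forall>\<epsilon> J. on_pde c J \<longrightarrow> on_pde c (galilean_boost \<epsilon> J))"

definition true_support :: "(nat \<Rightarrow> real) \<Rightarrow> nat set" where
  "true_support c = {j \<in> {1..10}. c j \<noteq> 0}"

definition library_G :: "nat set" where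
  "library_G = {4, 5, 6, 7, 8, 9, 10}"

end

theory Submission
  imports Defs
begin

text \<open>The boost maps the constant solution \<open>u = 0\<close> to the constant \<open>u = \<epsilon>\<close>, which solves
  \<open>u\<^sub>t = F\<close> only if \<open>c\<^sub>1 \<epsilon> + c\<^sub>2 \<epsilon>\<^sup>2 + c\<^sub>3 \<epsilon>\<^sup>3 = 0\<close>. Since this holds for every \<open>\<epsilon>\<close>,
  the coefficients of \<open>u\<close>, \<open>u\<^sup>2\<close>, \<open>u\<^sup>3\<close> vanish.\<close>

lemma cubic_without_constant_eq_0_imp_coeffs_eq_0:
  fixes a b d :: "'a :: field_char_0"
  assumes "\<And>x. a * x + b * x ^ 2 + d * x ^ 3 = 0"
  shows "a = 0 \<and> b = 0 \<and> d = 0"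
proof -
  have at_1: "a + b + d = 0" using assms[of 1] by simp
  have at_minus_1: "- a + b - d = 0" using assms[of "- 1"] by simp
  have at_2: "2 * a + 4 * b + 8 * d = 0" using assms[of 2] by (simp add: mult.commute)
  have "2 * b = (a + b + d) + (- a + b - d)" "2 * (a + d) = (a + b + d) - (- a + b - d)"
    by (simp_all add: algebra_simps)
  then have "2 * b = 0" "2 * (a + d) = 0" by (simp_all only: at_1 at_minus_1 add_0 diff_0_right)
  then have "b = 0" "d = - a" by (simp_all add: add_eq_0_iff)
  with at_2 show ?thesis by simp
qed

lemma galilean_invariant_constant_terms:
  assumes "galilean_invariant c"
  shows "c 1 * \<epsilon> + c 2 * \<epsilon> ^ 2 + c 3 * \<epsilon> ^ 3 = 0"
proof -
  define J0 where "J0 = \<lparr>jx = 0, jt = 0, ju = 0, jut = 0, jux = 0, juxx = 0,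
                        juxxx = 0, juxxxx = 0\<rparr>"
  have "on_pde c J0" by (simp add: J0_def on_pde_def rhsF_def)
  with assms have "on_pde c (galilean_boost \<epsilon> J0)"
    unfolding galilean_invariant_def by blast
  then show ?thesis by (simp add: J0_def on_pde_def rhsF_def galilean_boost_def)
qed

theorem mainTheorem4:
  fixes c :: "nat \<Rightarrow> real"
  assumes "galilean_invariant c"
  shows "true_support c \<subseteq> library_G"
proof
  fix j
  assume j: "j \<in> true_support c"
  have "c 1 = 0 \<and> c 2 = 0 \<and> c 3 = 0"
    by (rule cubic_without_constant_eq_0_imp_coeffs_eq_0)
      (rule galilean_invariant_constant_terms[OF assms])
  moreover from j have "j \<in> {1..10}" "c j \<noteq> 0" by (simp_all add: true_support_def)
  ultimately have "j \<in> {4..10}" by (cases "j \<le> 3") (auto simp: le_Suc_eq numeral_eq_Suc)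
  then show "j \<in> library_G" by (auto simp: library_G_def)
qed

end
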